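(* Let $D$ be an instance all of whose tuples are endogenous ($D^n=D$), let $\mathcal{Q}$ be a monotone query, and let $\bar a\in\mathcal{Q}(D)$. A tuple $t$ is a view-conditioned cause for $\bar a$ if and only if there is $D'\subseteq D$ with $t\in(D\smallsetminus D')\subseteq D^n$ and $\mathcal{Q}(D')=\mathcal{Q}(D)\smallsetminus\{\bar a\}$.
   Context: A query $\mathcal{Q}$ is monotone if $D_1\subseteq D_2$ implies $\mathcal{Q}(D_1)\subseteq\mathcal{Q}(D_2)$; $D\models\mathcal{Q}(\bar b)$ means $\bar b\in\mathcal{Q}(D)$. Let $\mathcal{Q}(D)=\{\bar a_1,\dots,\bar a_n\}$ with $\bar a=\bar a_k$. A tuple $\tau\in D^n$ is a view-conditioned counterfactual cause for $\bar a_k$ in an instance $D''$ if $D''\smallsetminus\{\tau\}\not\models\mathcal{Q}(\bar a_k)$ and $D''\smallsetminus\{\tau\}\models\mathcal{Q}(\bar a_i)$ for all $i\neq k$. $\tau$ is a view-conditioned cause for $\bar a_k$ if there is $\Gamma\subseteq D^n$ such that $\tau$ is a view-conditioned counterfactual cause for $\bar a_k$ in $D\smallsetminus\Gamma$. A subinstance $D'\subseteq D$ with $\mathcal{Q}(D')=\mathcal{Q}(D)\smallsetminus\{\bar a\}$ is called a solution to the view side-effect-free problem for $\bar a$. *)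

theory Defs
  imports Main
begin

(* Tuples of an instance have abstract type 'a; a query maps an instance
   (set of tuples) to its set of answers of type 'b.
   "D |= Q(b)" is rendered as "b \<in> Q D". *)

definition monotone_query :: "('a set \<Rightarrow> 'b set) \<Rightarrow> bool" where
  "monotone_query Q \<longleftrightarrow> (\<forall>D1 D2. D1 \<subseteq> D2 \<longrightarrow> Q D1 \<subseteq> Q D2)"

definition vc_counterfactual_cause ::
  "('a set \<Rightarrow> 'b set) \<Rightarrow> 'a set \<Rightarrow> 'a set \<Rightarrow> 'b \<Rightarrow> 'a set \<Rightarrow> 'a \<Rightarrow> bool" where
  "vc_counterfactual_cause Q D Dn a D'' \<tau> \<longleftrightarrow>
     \<tau> \<in> Dn \<and> a \<notin> Q (D'' - {\<tau>}) \<and> (\<forall>b \<in> Q D - {a}. b \<in> Q (D'' - {\<tau>}))"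

definition vc_cause :: "('a set \<Rightarrow> 'b set) \<Rightarrow> 'a set \<Rightarrow> 'a set \<Rightarrow> 'b \<Rightarrow> 'a \<Rightarrow> bool" where
  "vc_cause Q D Dn a \<tau> \<longleftrightarrow> (\<exists>\<Gamma>. \<Gamma> \<subseteq> Dn \<and> vc_counterfactual_cause Q D Dn a (D - \<Gamma>) \<tau>)"

end

theory Submission
  imports Defs
begin

text \<open>For a monotone query, Q (D - \<Gamma> - {t}) \<subseteq> Q D, so "a is lost and every other
  answer survives" says precisely that D - \<Gamma> - {t} is a solution for a. Conversely a
  solution D' missing t arises this way from the contingency set \<Gamma> = D - D' - {t}.\<close>

lemma vc_counterfactual_cause_iff:
  assumes "monotone_query Q" and "D'' \<subseteq> D"
  shows "vc_counterfactual_cause Q D Dn a D'' t \<longleftrightarrow>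
         t \<in> Dn \<and> Q (D'' - {t}) = Q D - {a}"
proof -
  have "Q (D'' - {t}) \<subseteq> Q D"
    using assms unfolding monotone_query_def by blast
  then have "Q (D'' - {t}) = Q D - {a} \<longleftrightarrow>
             a \<notin> Q (D'' - {t}) \<and> (\<forall>b \<in> Q D - {a}. b \<in> Q (D'' - {t}))"
    by blast
  then show ?thesis
    unfolding vc_counterfactual_cause_def by blast
qed

lemma vc_cause_imp_solution:
  assumes "monotone_query Q" and "Dn \<subseteq> D" and "vc_cause Q D Dn a t"
  shows "\<exists>D'. D' \<subseteq> D \<and> t \<in> D - D' \<and> D - D' \<subseteq> Dn \<and> Q D' = Q D - {a}"
proof -
  obtain \<Gamma> where "\<Gamma> \<subseteq> Dn" and "vc_counterfactual_cause Q D Dn a (D - \<Gamma>) t"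
    using assms(3) unfolding vc_cause_def by blast
  then have "t \<in> Dn" and "Q (D - \<Gamma> - {t}) = Q D - {a}"
    using vc_counterfactual_cause_iff[OF assms(1) Diff_subset] by simp_all
  moreover have "D - (D - \<Gamma> - {t}) \<subseteq> Dn"
    using \<open>\<Gamma> \<subseteq> Dn\<close> \<open>t \<in> Dn\<close> by blast
  moreover have "t \<in> D - (D - \<Gamma> - {t})"
    using \<open>t \<in> Dn\<close> assms(2) by blast
  ultimately show ?thesis
    by (intro exI[of _ "D - \<Gamma> - {t}"]) blast
qed

lemma solution_imp_vc_cause:
  assumes "monotone_query Q" and "D' \<subseteq> D" and "t \<in> D - D'" and "D - D' \<subseteq> Dn"
    and "Q D' = Q D - {a}"
  shows "vc_cause Q D Dn a t"
proof -
  let ?\<Gamma> = "D - D' - {t}"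
  have "D - ?\<Gamma> - {t} = D'"
    using assms(2,3) by blast
  moreover have "t \<in> Dn"
    using assms(3,4) by blast
  ultimately have "vc_counterfactual_cause Q D Dn a (D - ?\<Gamma>) t"
    using assms(5) vc_counterfactual_cause_iff[OF assms(1), of "D - ?\<Gamma>" D] by simp
  moreover have "?\<Gamma> \<subseteq> Dn"
    using assms(4) by blast
  ultimately show ?thesis
    unfolding vc_cause_def by blast
qed

theorem proposition12:
  fixes Q :: "'a set \<Rightarrow> 'b set" and D Dn :: "'a set" and a :: 'b and t :: 'a
  assumes "finite D" and "Dn = D" and "monotone_query Q" and "a \<in> Q D"
  shows "vc_cause Q D Dn a t \<longleftrightarrow>
         (\<exists>D'. D' \<subseteq> D \<and> t \<in> D - D' \<and> D - D' \<subseteq> Dn \<and> Q D' = Q D - {a})"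
proof
  assume "vc_cause Q D Dn a t"
  then show "\<exists>D'. D' \<subseteq> D \<and> t \<in> D - D' \<and> D - D' \<subseteq> Dn \<and> Q D' = Q D - {a}"
    using vc_cause_imp_solution[OF assms(3) equalityD1[OF assms(2)]] by blast
next
  assume "\<exists>D'. D' \<subseteq> D \<and> t \<in> D - D' \<and> D - D' \<subseteq> Dn \<and> Q D' = Q D - {a}"
  then show "vc_cause Q D Dn a t"
    using solution_imp_vc_cause[OF assms(3)] by (elim exE conjE)
qed

end
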